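(* Let $M$ be a matroid flock on a finite set $E$. There is a unique function $g:\mathbb{Z}^E\to\mathbb{Z}$ such that (1) $g(0)=0$, and (2) $g(\alpha+e_I)=g(\alpha)+r_\alpha(I)$ for all $\alpha\in\mathbb{Z}^E$ and $I\subseteq E$.
   Context: $e_I:=\sum_{i\in I}e_i$ ($e_i$ unit vectors), $\mathbf{1}:=e_E$. A matroid flock of rank $d$ on $E$ is a map $M$ assigning to each $\alpha\in\mathbb{Z}^E$ a matroid $M_\alpha$ on $E$ of rank $d$ with (MF1) $M_\alpha/i=M_{\alpha+e_i}\setminus i$ for all $\alpha$, $i\in E$ (contraction, deletion); and (MF2) $M_\alpha=M_{\alpha+\mathbf{1}}$ for all $\alpha$. $r_\alpha$ denotes the rank function of $M_\alpha$. *)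

theory Defs
  imports Main
begin

definition matroid_on :: "'a set \<Rightarrow> ('a set \<Rightarrow> bool) \<Rightarrow> bool" where
  "matroid_on E indep \<longleftrightarrow>
     finite E \<and>
     (\<forall>X. indep X \<longrightarrow> X \<subseteq> E) \<and>
     indep {} \<and>
     (\<forall>X Y. indep Y \<and> X \<subseteq> Y \<longrightarrow> indep X) \<and>
     (\<forall>X Y. indep X \<and> indep Y \<and> card X < card Y \<longrightarrow> (\<exists>y\<in>Y - X. indep (insert y X)))"

definition mrank :: "('a set \<Rightarrow> bool) \<Rightarrow> 'a set \<Rightarrow> nat" where
  "mrank indep X = Max (card ` {Y. Y \<subseteq> X \<and> indep Y})"

definition mdelete :: "('a set \<Rightarrow> bool) \<Rightarrow> 'a \<Rightarrow> 'a set \<Rightarrow> bool" where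
  "mdelete indep i = (\<lambda>X. indep X \<and> i \<notin> X)"

definition mcontract :: "('a set \<Rightarrow> bool) \<Rightarrow> 'a \<Rightarrow> 'a set \<Rightarrow> bool" where
  "mcontract indep i = (\<lambda>X. i \<notin> X \<and> (if indep {i} then indep (insert i X) else indep X))"

text \<open>Indicator vector e_I in Z^E (E is the finite type 'a).\<close>
definition evec :: "'a set \<Rightarrow> 'a \<Rightarrow> int" where
  "evec I = (\<lambda>x. if x \<in> I then 1 else 0)"

definition matroid_flock :: "(('a::finite \<Rightarrow> int) \<Rightarrow> 'a set \<Rightarrow> bool) \<Rightarrow> nat \<Rightarrow> bool" where
  "matroid_flock M d \<longleftrightarrow>
     (\<forall>\<alpha>. matroid_on UNIV (M \<alpha>) \<and> mrank (M \<alpha>) UNIV = d) \<and>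
     (\<forall>\<alpha> i. mcontract (M \<alpha>) i = mdelete (M (\<lambda>x. \<alpha> x + evec {i} x)) i) \<and>
     (\<forall>\<alpha>. M \<alpha> = M (\<lambda>x. \<alpha> x + 1))"

end

theory Submission
  imports Defs "HOL-Library.Multiset"
begin

text \<open>
  For \<open>i \<notin> X\<close>, axiom (MF1) and the rank formula for a contraction give
  \<open>r_(\<alpha> + e_i)(X) + r_\<alpha>({i}) = r_\<alpha>(X \<union> {i})\<close>.  So the two ways around a unit square
  collect the same sum of singleton ranks, hence the sum collected along a lattice path of unit
  steps depends only on the multiset of steps, and along a path adding the elements of \<open>I\<close> one
  at a time it is \<open>r_\<alpha>(I)\<close>.  A potential \<open>g\<close> is therefore forced along every such path, and on
  constant vectors by \<open>g(c\<cdot>1) = c\<cdot>d\<close>, since a step by \<open>e_E\<close> costs \<open>r(E) = d\<close>; path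
  independence shows that this prescription is consistent.
\<close>

lemma matroid_on_indep_empty: "matroid_on E N \<Longrightarrow> N {}"
  unfolding matroid_on_def by blast

lemma matroid_on_indep_subset: "matroid_on E N \<Longrightarrow> N Y \<Longrightarrow> X \<subseteq> Y \<Longrightarrow> N X"
  unfolding matroid_on_def by blast

lemma matroid_on_exchange:
  "matroid_on E N \<Longrightarrow> N X \<Longrightarrow> N Y \<Longrightarrow> card X < card Y \<Longrightarrow> \<exists>y\<in>Y - X. N (insert y X)"
  unfolding matroid_on_def by blast

lemma matroid_on_finite: "matroid_on E N \<Longrightarrow> N X \<Longrightarrow> finite X"
  unfolding matroid_on_def by (meson finite_subset)

lemma finite_indep_subsets: "finite X \<Longrightarrow> finite {Y. Y \<subseteq> X \<and> N Y}"
  by (rule finite_subset[of _ "Pow X"]) auto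

lemma mrank_witness:
  assumes "N {}" "finite X"
  obtains Y where "Y \<subseteq> X" "N Y" "card Y = mrank N X"
proof -
  have "card ` {Y. Y \<subseteq> X \<and> N Y} \<noteq> {}" using assms(1) by blast
  then have "mrank N X \<in> card ` {Y. Y \<subseteq> X \<and> N Y}"
    unfolding mrank_def using finite_indep_subsets[OF assms(2)] by (intro Max_in) simp_all
  then obtain Y where "Y \<subseteq> X" "N Y" "mrank N X = card Y" by auto
  then show ?thesis by (intro that) simp_all
qed

lemma mrank_ge:
  assumes "finite X" "Y \<subseteq> X" "N Y"
  shows "card Y \<le> mrank N X"
  unfolding mrank_def using assms finite_indep_subsets[OF assms(1)] by (intro Max_ge) simp_all

lemma mrank_eqI:
  assumes "finite X" "Y \<subseteq> X" "N Y" "\<And>Z. Z \<subseteq> X \<Longrightarrow> N Z \<Longrightarrow> card Z \<le> card Y"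
  shows "mrank N X = card Y"
  unfolding mrank_def using assms finite_indep_subsets[OF assms(1)] by (intro Max_eqI) auto

lemma mrank_empty: "N {} \<Longrightarrow> mrank N {} = 0"
  using mrank_eqI[of "{}" "{}" N] by simp

lemma matroid_augment:
  assumes m: "matroid_on E N" and "N B"
  shows "N A \<Longrightarrow> card A \<le> card B \<Longrightarrow> \<exists>Z. A \<subseteq> Z \<and> Z \<subseteq> A \<union> B \<and> N Z \<and> card Z = card B"
proof (induction "card B - card A" arbitrary: A)
  case 0
  then show ?case by (intro exI[of _ A]) auto
next
  case (Suc n)
  then have "card A < card B" by simp
  then obtain y where y: "y \<in> B - A" "N (insert y A)"
    using matroid_on_exchange[OF m \<open>N A\<close> \<open>N B\<close>] by blast
  have "finite A" using matroid_on_finite[OF m \<open>N A\<close>] .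
  then have "card (insert y A) = Suc (card A)" using y by simp
  then have "n = card B - card (insert y A)" "card (insert y A) \<le> card B"
    using Suc.hyps(2) \<open>card A < card B\<close> by simp_all
  then obtain Z where "insert y A \<subseteq> Z" "Z \<subseteq> insert y A \<union> B" "N Z" "card Z = card B"
    using Suc.hyps(1) y(2) by blast
  then show ?case using y by blast
qed

lemma mrank_mdelete:
  assumes "i \<notin> X"
  shows "mrank (mdelete N i) X = mrank N X"
proof -
  have "{Y. Y \<subseteq> X \<and> mdelete N i Y} = {Y. Y \<subseteq> X \<and> N Y}"
    using assms unfolding mdelete_def by auto
  then show ?thesis unfolding mrank_def by simp
qed

lemma mrank_mcontract:
  assumes m: "matroid_on E N" and X: "finite X" "i \<notin> X"
  shows "mrank (mcontract N i) X + mrank N {i} = mrank N (insert i X)"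
proof (cases "N {i}")
  case True
  have "mrank N {i} = 1"
    using mrank_eqI[of "{i}" "{i}" N] True card_mono[of "{i}"] by simp
  obtain B where B: "B \<subseteq> insert i X" "N B" "card B = mrank N (insert i X)"
    using mrank_witness[of N "insert i X"] matroid_on_indep_empty[OF m] X by blast
  then have "card {i} \<le> card B" using mrank_ge[of "insert i X" "{i}" N] True X by simp
  then obtain Z where Z: "{i} \<subseteq> Z" "Z \<subseteq> insert i B" "N Z" "card Z = card B"
    using matroid_augment[OF m B(2) True] by auto
  have "finite Z" using matroid_on_finite[OF m \<open>N Z\<close>] .
  have Y: "Z - {i} \<subseteq> X" "mcontract N i (Z - {i})" "card (Z - {i}) = card B - 1"
    using Z B X \<open>finite Z\<close> unfolding mcontract_def by (auto simp: True insert_absorb)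
  have "mrank (mcontract N i) X = card (Z - {i})"
  proof (rule mrank_eqI[where N = "mcontract N i", OF X(1) Y(1,2)])
    fix W assume W: "W \<subseteq> X" "mcontract N i W"
    then have "N (insert i W)" "i \<notin> W" unfolding mcontract_def using True by auto
    then have "card (insert i W) \<le> card B"
      using mrank_ge[of "insert i X" "insert i W" N] W B X by auto
    then show "card W \<le> card (Z - {i})"
      using Y \<open>i \<notin> W\<close> finite_subset[OF W(1) X(1)] by simp
  qed
  then show ?thesis using Y \<open>mrank N {i} = 1\<close> \<open>card {i} \<le> card B\<close> B by simp
next
  case False
  then have loop: "N Y \<Longrightarrow> i \<notin> Y" for Y
    using matroid_on_indep_subset[OF m, of Y "{i}"] by auto
  have "{Y. Y \<subseteq> X \<and> mcontract N i Y} = {Y. Y \<subseteq> insert i X \<and> N Y}"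
    using X(2) False loop unfolding mcontract_def by auto
  moreover have "mrank N {i} = 0"
    using mrank_eqI[of "{i}" "{}" N] matroid_on_indep_empty[OF m] loop
    by (force simp: subset_singleton_iff)
  ultimately show ?thesis unfolding mrank_def by simp
qed

definition add_evec :: "('a \<Rightarrow> int) \<Rightarrow> 'a set \<Rightarrow> 'a \<Rightarrow> int" where
  "add_evec \<alpha> I = (\<lambda>x. \<alpha> x + evec I x)"

definition walk_end :: "('a \<Rightarrow> int) \<Rightarrow> 'a list \<Rightarrow> 'a \<Rightarrow> int" where
  "walk_end \<alpha> js = (\<lambda>x. \<alpha> x + int (count (mset js) x))"

primrec walk_gain :: "(('a \<Rightarrow> int) \<Rightarrow> 'a set \<Rightarrow> bool) \<Rightarrow> ('a \<Rightarrow> int) \<Rightarrow> 'a list \<Rightarrow> int" where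
  "walk_gain M \<alpha> [] = 0"
| "walk_gain M \<alpha> (j # js) = int (mrank (M \<alpha>) {j}) + walk_gain M (add_evec \<alpha> {j}) js"

lemma add_evec_commute: "add_evec (add_evec \<alpha> {i}) {j} = add_evec (add_evec \<alpha> {j}) {i}"
  unfolding add_evec_def evec_def by auto

lemma walk_end_Nil [simp]: "walk_end \<alpha> [] = \<alpha>"
  unfolding walk_end_def by simp

lemma walk_end_Cons: "walk_end \<alpha> (j # js) = walk_end (add_evec \<alpha> {j}) js"
  unfolding walk_end_def add_evec_def evec_def by auto

lemma walk_end_append: "walk_end \<alpha> (xs @ ys) = walk_end (walk_end \<alpha> xs) ys"
  unfolding walk_end_def by auto

lemma walk_end_distinct: "distinct js \<Longrightarrow> walk_end \<alpha> js = add_evec \<alpha> (set js)"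
  unfolding walk_end_def add_evec_def evec_def by (auto simp: distinct_count_atmost_1)

lemma walk_end_eq_iff: "walk_end \<alpha> xs = walk_end \<alpha> ys \<longleftrightarrow> mset xs = mset ys"
  unfolding walk_end_def by (auto simp: fun_eq_iff multiset_eq_iff)

lemma walk_end_surj:
  fixes \<alpha> :: "'a::finite \<Rightarrow> int"
  shows "\<exists>c js. walk_end (\<lambda>_. c) js = \<alpha>"
proof -
  define c where "c = Min (range \<alpha>)"
  have c_le: "c \<le> \<alpha> x" for x
    unfolding c_def by simp
  obtain js where "mset js = Abs_multiset (\<lambda>x. nat (\<alpha> x - c))"
    using ex_mset by blast
  then have "walk_end (\<lambda>_. c) js = \<alpha>"
    using c_le unfolding walk_end_def by (auto simp: fun_eq_iff)
  then show ?thesis by blast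
qed

lemma walk_end_rounds:
  assumes "distinct us" "set us = UNIV"
  shows "walk_end \<alpha> (concat (replicate k us)) = (\<lambda>x. \<alpha> x + int k)"
proof (induction k arbitrary: \<alpha>)
  case (Suc k)
  have "walk_end \<alpha> us = (\<lambda>x. \<alpha> x + 1)"
    using walk_end_distinct[OF assms(1)] assms(2) unfolding add_evec_def evec_def by simp
  then show ?case using Suc by (simp add: walk_end_append add.assoc)
qed simp

lemma walk_gain_append:
  "walk_gain M \<alpha> (xs @ ys) = walk_gain M \<alpha> xs + walk_gain M (walk_end \<alpha> xs) ys"
  by (induction xs arbitrary: \<alpha>) (simp_all add: walk_end_Cons)

lemma potential_along_walk:
  assumes "\<And>\<alpha> I. g (add_evec \<alpha> I) = g \<alpha> + int (mrank (M \<alpha>) I)"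
  shows "g (walk_end \<alpha> js) = g \<alpha> + walk_gain M \<alpha> js"
  using assms by (induction js arbitrary: \<alpha>) (simp_all add: walk_end_Cons)

text \<open>Every vector is the end of a walk from a constant vector (\<open>walk_end_surj\<close>), and the value
  does not depend on the walk chosen (\<open>walk_value_eq\<close>).\<close>
definition flock_potential ::
    "(('a::finite \<Rightarrow> int) \<Rightarrow> 'a set \<Rightarrow> bool) \<Rightarrow> nat \<Rightarrow> ('a \<Rightarrow> int) \<Rightarrow> int" where
  "flock_potential M d \<alpha> =
     (THE v. \<exists>c js. walk_end (\<lambda>_. c) js = \<alpha> \<and> v = c * int d + walk_gain M (\<lambda>_. c) js)"

context
  fixes M :: "('a::finite \<Rightarrow> int) \<Rightarrow> 'a set \<Rightarrow> bool" and d :: nat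
  assumes flock: "matroid_flock M d"
begin

lemma flock_matroid: "matroid_on UNIV (M \<alpha>)"
  using flock unfolding matroid_flock_def by blast

lemma flock_mrank_UNIV: "mrank (M \<alpha>) UNIV = d"
  using flock unfolding matroid_flock_def by blast

lemma flock_mrank_insert:
  assumes "i \<notin> X"
  shows "mrank (M (add_evec \<alpha> {i})) X + mrank (M \<alpha>) {i} = mrank (M \<alpha>) (insert i X)"
proof -
  have "mcontract (M \<alpha>) i = mdelete (M (add_evec \<alpha> {i})) i"
    using flock unfolding matroid_flock_def add_evec_def by blast
  then show ?thesis
    using mrank_mcontract[OF flock_matroid[of \<alpha>] finite assms] mrank_mdelete[OF assms] by simp
qed

lemma walk_gain_swap: "walk_gain M \<alpha> (i # j # js) = walk_gain M \<alpha> (j # i # js)"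
proof (cases "i = j")
  case False
  have "mrank (M (add_evec \<alpha> {i})) {j} + mrank (M \<alpha>) {i}
      = mrank (M (add_evec \<alpha> {j})) {i} + mrank (M \<alpha>) {j}"
    using flock_mrank_insert[of i "{j}" \<alpha>] flock_mrank_insert[of j "{i}" \<alpha>] False
    by (simp add: insert_commute)
  then show ?thesis by (simp add: add_evec_commute[of \<alpha> i j])
qed simp

lemma walk_gain_move_to_front:
  "j \<in> set xs \<Longrightarrow> walk_gain M \<alpha> xs = walk_gain M \<alpha> (j # remove1 j xs)"
proof (induction xs arbitrary: \<alpha>)
  case (Cons x xs)
  show ?case
  proof (cases "x = j")
    case False
    then have "walk_gain M \<alpha> (x # xs) = walk_gain M \<alpha> (x # j # remove1 j xs)"
      using Cons by simp
    also have "\<dots> = walk_gain M \<alpha> (j # remove1 j (x # xs))"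
      using False walk_gain_swap by simp
    finally show ?thesis .
  qed simp
qed simp

lemma walk_gain_mset: "mset xs = mset ys \<Longrightarrow> walk_gain M \<alpha> xs = walk_gain M \<alpha> ys"
proof (induction xs arbitrary: ys \<alpha>)
  case (Cons x xs)
  then have "x \<in> set ys"
    by (metis list.set_intros(1) mset_eq_setD)
  have "mset xs = mset (remove1 x ys)"
    by (simp flip: Cons.prems)
  then show ?case
    using Cons.IH \<open>x \<in> set ys\<close> walk_gain_move_to_front[of x ys \<alpha>] by simp
qed simp

lemma walk_gain_distinct: "distinct js \<Longrightarrow> walk_gain M \<alpha> js = int (mrank (M \<alpha>) (set js))"
proof (induction js arbitrary: \<alpha>)
  case Nil
  show ?case using mrank_empty[of "M \<alpha>"] matroid_on_indep_empty[OF flock_matroid] by simp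
next
  case (Cons j js)
  then show ?case using flock_mrank_insert[of j "set js" \<alpha>] by simp
qed

lemma walk_gain_rounds:
  assumes "distinct us" "set us = UNIV"
  shows "walk_gain M \<alpha> (concat (replicate k us)) = int k * int d"
proof (induction k arbitrary: \<alpha>)
  case (Suc k)
  then show ?case
    using walk_gain_distinct[OF assms(1)] assms(2) flock_mrank_UNIV
    by (simp add: walk_gain_append algebra_simps)
qed simp

lemma walk_value_eq_if_le:
  assumes "walk_end (\<lambda>_. c) xs = walk_end (\<lambda>_. c') xs'" and le: "c \<le> c'"
  shows "c * int d + walk_gain M (\<lambda>_. c) xs = c' * int d + walk_gain M (\<lambda>_. c') xs'"
proof -
  obtain us :: "'a list" where us: "distinct us" "set us = UNIV"
    using finite_distinct_list[OF finite] by blast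
  \<comment> \<open>climb from \<open>c\<close> to \<open>c'\<close> by \<open>k\<close> rounds through all of \<open>E\<close>, each collecting \<open>r(E) = d\<close>\<close>
  define k where "k = nat (c' - c)"
  define zs where "zs = concat (replicate k us) @ xs'"
  have "walk_end (\<lambda>_. c) zs = walk_end (\<lambda>_. c') xs'"
    using le unfolding zs_def k_def walk_end_append walk_end_rounds[OF us] by simp
  then have "mset zs = mset xs"
    using assms walk_end_eq_iff by metis
  then have "walk_gain M (\<lambda>_. c) xs = walk_gain M (\<lambda>_. c) zs"
    by (metis walk_gain_mset)
  also have "\<dots> = int k * int d + walk_gain M (\<lambda>_. c') xs'"
    using le unfolding zs_def k_def walk_gain_append walk_end_rounds[OF us] walk_gain_rounds[OF us]
    by simp
  finally show ?thesis
    using le unfolding k_def by (simp add: algebra_simps)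
qed

lemma walk_value_eq:
  "walk_end (\<lambda>_. c) xs = walk_end (\<lambda>_. c') xs' \<Longrightarrow>
    c * int d + walk_gain M (\<lambda>_. c) xs = c' * int d + walk_gain M (\<lambda>_. c') xs'"
  using walk_value_eq_if_le[of c xs c' xs'] walk_value_eq_if_le[of c' xs' c xs] by fastforce

lemma flock_potential_eq:
  assumes "walk_end (\<lambda>_. c) js = \<alpha>"
  shows "flock_potential M d \<alpha> = c * int d + walk_gain M (\<lambda>_. c) js"
  unfolding flock_potential_def
proof (rule the_equality)
  fix v
  assume "\<exists>c' js'. walk_end (\<lambda>_. c') js' = \<alpha> \<and> v = c' * int d + walk_gain M (\<lambda>_. c') js'"
  then obtain c' js' where "walk_end (\<lambda>_. c') js' = \<alpha>" "v = c' * int d + walk_gain M (\<lambda>_. c') js'"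
    by blast
  then show "v = c * int d + walk_gain M (\<lambda>_. c) js"
    using walk_value_eq[of c' js' c js] assms by simp
qed (use assms in blast)

lemma flock_potential_zero: "flock_potential M d (\<lambda>_. 0) = 0"
  using flock_potential_eq[of 0 "[]"] by simp

lemma flock_potential_add_evec:
  "flock_potential M d (add_evec \<alpha> I) = flock_potential M d \<alpha> + int (mrank (M \<alpha>) I)"
proof -
  obtain c xs where xs: "walk_end (\<lambda>_. c) xs = \<alpha>"
    using walk_end_surj by blast
  obtain js :: "'a list" where js: "distinct js" "set js = I"
    using finite_distinct_list[OF finite] by blast
  have "walk_end (\<lambda>_. c) (xs @ js) = add_evec \<alpha> I"
    using xs js by (simp add: walk_end_append walk_end_distinct)
  then show ?thesis
    using flock_potential_eq[OF xs] flock_potential_eq[of c "xs @ js"] xs js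
    by (simp add: walk_gain_append walk_gain_distinct)
qed

lemma potential_on_constants:
  assumes g: "\<And>\<alpha> I. g (add_evec \<alpha> I) = g \<alpha> + int (mrank (M \<alpha>) I)" and "c \<le> c'"
  shows "g (\<lambda>_. c') = g (\<lambda>_. c) + (c' - c) * int d"
proof -
  obtain us :: "'a list" where us: "distinct us" "set us = UNIV"
    using finite_distinct_list[OF finite] by blast
  show ?thesis
    using potential_along_walk[OF g, of "\<lambda>_. c" "concat (replicate (nat (c' - c)) us)"]
      walk_end_rounds[OF us] walk_gain_rounds[OF us] \<open>c \<le> c'\<close>
    by simp
qed

lemma flock_potential_unique:
  assumes g0: "g (\<lambda>_. 0) = 0"
    and g: "\<And>\<alpha> I. g (add_evec \<alpha> I) = g \<alpha> + int (mrank (M \<alpha>) I)"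
  shows "g = flock_potential M d"
proof
  fix \<alpha> :: "'a \<Rightarrow> int"
  obtain c js where js: "walk_end (\<lambda>_. c) js = \<alpha>"
    using walk_end_surj by blast
  have "g (\<lambda>_. c) = c * int d"
    using potential_on_constants[OF g, of 0 c] potential_on_constants[OF g, of c 0] g0
    by (cases "0 \<le> c") (simp_all add: algebra_simps)
  then show "g \<alpha> = flock_potential M d \<alpha>"
    using potential_along_walk[OF g, of "\<lambda>_. c" js] flock_potential_eq[OF js] js by simp
qed

end

theorem mainTheorem11:
  fixes M :: "('a::finite \<Rightarrow> int) \<Rightarrow> 'a set \<Rightarrow> bool" and d :: nat
  assumes "matroid_flock M d"
  shows "\<exists>!g :: ('a \<Rightarrow> int) \<Rightarrow> int.
           g (\<lambda>_. 0) = 0 \<and>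
           (\<forall>\<alpha> I. g (\<lambda>x. \<alpha> x + evec I x) = g \<alpha> + int (mrank (M \<alpha>) I))"
proof (rule ex1I[of _ "flock_potential M d"])
  show "flock_potential M d (\<lambda>_. 0) = 0 \<and>
      (\<forall>\<alpha> I. flock_potential M d (\<lambda>x. \<alpha> x + evec I x)
        = flock_potential M d \<alpha> + int (mrank (M \<alpha>) I))"
    using flock_potential_zero[OF assms] flock_potential_add_evec[OF assms]
    unfolding add_evec_def by simp
next
  fix g :: "('a \<Rightarrow> int) \<Rightarrow> int"
  assume "g (\<lambda>_. 0) = 0 \<and> (\<forall>\<alpha> I. g (\<lambda>x. \<alpha> x + evec I x) = g \<alpha> + int (mrank (M \<alpha>) I))"
  then show "g = flock_potential M d"
    using flock_potential_unique[OF assms] unfolding add_evec_def by blast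
qed

end
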